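(* The identities (A6) $x\wedge(y\wedge z)\approx y\wedge(z\wedge x)$, (J5') $x\approx (x'\wedge y)'\wedge(x'\wedge y')'$ form a 2-base for the variety $\mathbb{BA}$ of Boolean algebras (in the language $\langle\wedge,{}'\rangle$).
   Context: Algebras are of type $\langle \wedge, {}'\rangle$ with $\wedge$ binary and ${}'$ unary. The variety $\mathbb{BA}$ of Boolean algebras in this language consists of the algebras $\langle B,\wedge,{}'\rangle$ obtained from Boolean algebras by keeping only meet and complement (equivalently, the variety generated by the two-element Boolean algebra with meet and complement). A base for a variety is an independent set of identities (no identity in the set follows from the others) that defines the variety; an $n$-base is a base with exactly $n$ identities. *)

theory Defs
  imports Main
begin

datatype trm = Var nat | Meet trm trm | Cmp trm

type_synonym eqn = "trm \<times> trm"

fun eval :: "('a \<Rightarrow> 'a \<Rightarrow> 'a) \<Rightarrow> ('a \<Rightarrow> 'a) \<Rightarrow> (nat \<Rightarrow> 'a) \<Rightarrow> trm \<Rightarrow> 'a" where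
  "eval m c \<rho> (Var i) = \<rho> i"
| "eval m c \<rho> (Meet s t) = m (eval m c \<rho> s) (eval m c \<rho> t)"
| "eval m c \<rho> (Cmp s) = c (eval m c \<rho> s)"

definition sat :: "('a \<Rightarrow> 'a \<Rightarrow> 'a) \<Rightarrow> ('a \<Rightarrow> 'a) \<Rightarrow> eqn \<Rightarrow> bool" where
  "sat m c e \<longleftrightarrow> (\<forall>\<rho>. eval m c \<rho> (fst e) = eval m c \<rho> (snd e))"

definition models :: "('a \<Rightarrow> 'a \<Rightarrow> 'a) \<Rightarrow> ('a \<Rightarrow> 'a) \<Rightarrow> eqn set \<Rightarrow> bool" where
  "models m c E \<longleftrightarrow> (\<forall>e\<in>E. sat m c e)"

text \<open>The variety BA: algebras satisfying every identity valid in the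
  two-element Boolean algebra (with meet and complement).\<close>
definition in_BA :: "('a \<Rightarrow> 'a \<Rightarrow> 'a) \<Rightarrow> ('a \<Rightarrow> 'a) \<Rightarrow> bool" where
  "in_BA m c \<longleftrightarrow> (\<forall>e. sat (\<and>) Not e \<longrightarrow> sat m c e)"

definition algebra_on :: "'a set \<Rightarrow> ('a \<Rightarrow> 'a \<Rightarrow> 'a) \<Rightarrow> ('a \<Rightarrow> 'a) \<Rightarrow> bool" where
  "algebra_on A m c \<longleftrightarrow> A \<noteq> {} \<and> (\<forall>x\<in>A. \<forall>y\<in>A. m x y \<in> A) \<and> (\<forall>x\<in>A. c x \<in> A)"

definition sat_on :: "'a set \<Rightarrow> ('a \<Rightarrow> 'a \<Rightarrow> 'a) \<Rightarrow> ('a \<Rightarrow> 'a) \<Rightarrow> eqn \<Rightarrow> bool" where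
  "sat_on A m c e \<longleftrightarrow>
     (\<forall>\<rho>. (\<forall>i. \<rho> i \<in> A) \<longrightarrow> eval m c \<rho> (fst e) = eval m c \<rho> (snd e))"

text \<open>Semantic consequence: every algebra satisfying E satisfies e
  (countermodels taken with carrier a subset of nat; by downward
  Loewenheim-Skolem this loses no generality).\<close>
definition follows :: "eqn set \<Rightarrow> eqn \<Rightarrow> bool" where
  "follows E e \<longleftrightarrow>
     (\<forall>(A::nat set) m c. algebra_on A m c \<longrightarrow> (\<forall>d\<in>E. sat_on A m c d) \<longrightarrow> sat_on A m c e)"

definition independent :: "eqn set \<Rightarrow> bool" where
  "independent E \<longleftrightarrow> (\<forall>e\<in>E. \<not> follows (E - {e}) e)"

definition A6 :: eqn where
  "A6 = (Meet (Var 0) (Meet (Var 1) (Var 2)), Meet (Var 1) (Meet (Var 2) (Var 0)))"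

definition J5' :: eqn where
  "J5' = (Var 0,
          Meet (Cmp (Meet (Cmp (Var 0)) (Var 1)))
               (Cmp (Meet (Cmp (Var 0)) (Cmp (Var 1)))))"

end

theory Submission
  imports Defs
begin

(* By J5' every element is a meet, and a groupoid whose multiplication is onto and satisfies
   the cyclic law A6 is a commutative semigroup.  Commutativity, associativity and J5' are
   Huntington's axioms for Boolean algebras, dualised to meet and complement.  In a Huntington
   algebra every y is determined by a \<and> y and a' \<and> y, and for fixed a the relation
   a \<and> u = a \<and> v is a congruence; so an identity can be checked by splitting on its
   variables one at a time until all of them are 0 or 1, where it reduces to the two-element
   algebra.  Independence: the left projection with the identity complement satisfies J5' but
   not A6, and a constant meet satisfies A6 but not J5'. *)

fun vars :: "trm \<Rightarrow> nat set" where
  "vars (Var i) = {i}"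
| "vars (Meet s t) = vars s \<union> vars t"
| "vars (Cmp s) = vars s"

lemma finite_vars: "finite (vars t)"
  by (induction t) auto

lemma eval_cong: "(\<And>i. i \<in> vars t \<Longrightarrow> \<rho> i = \<sigma> i) \<Longrightarrow> eval m c \<rho> t = eval m c \<sigma> t"
  by (induction t) auto

lemma cyclic_surj_abel_semigroup:
  fixes m :: "'a \<Rightarrow> 'a \<Rightarrow> 'a"
  assumes cyclic: "\<And>x y z. m x (m y z) = m y (m z x)"
    and surj: "\<And>x. \<exists>a b. m a b = x"
  shows "abel_semigroup m"
proof -
  obtain l r where factor: "\<And>x. m (l x) (r x) = x"
    using surj by metis
  have rotate: "m x (m y z) = m z (m x y)" for x y z
    using cyclic by metis
  have right_mult: "m z x = m (l x) (m (r x) z)" for x z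
    using cyclic factor by metis
  have "m (m x y) z = m x (m z y)" for x y z
    using right_mult rotate by metis
  then have commute: "m x y = m y x" for x y
    using factor rotate by metis
  show ?thesis
  proof
    show "m x y = m y x" for x y
      by (rule commute)
    show "m (m x y) z = m x (m y z)" for x y z
      using commute rotate by metis
  qed
qed

locale huntington_algebra = abel_semigroup m
  for m :: "'a \<Rightarrow> 'a \<Rightarrow> 'a" +
  fixes c :: "'a \<Rightarrow> 'a"
  assumes huntington: "x = m (c (m (c x) y)) (c (m (c x) (c y)))"
begin

lemma compl_compl [simp]: "c (c x) = x"
  by (smt (verit) huntington assoc commute)

lemma compl_split: "c x = m (c (m x y)) (c (m x (c y)))"
  using huntington[of "c x" y] by simp

lemma meet_compl_eq: "m x (c x) = m y (c y)"
proof -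
  have "m x (c (m (c y) x)) = m y (c (m (c x) y))" for x y
    using left_commute by (smt (verit) huntington commute)
  then show ?thesis
    using compl_split commute left_commute by metis
qed

definition bottom :: 'a where
  "bottom = m undefined (c undefined)"

lemma meet_compl [simp]: "m x (c x) = bottom"
  unfolding bottom_def by (rule meet_compl_eq)

lemma compl_meet [simp]: "m (c x) x = bottom"
  using commute meet_compl by metis

lemma meet_bottom [simp]: "m x bottom = bottom"
proof -
  have "m x bottom = m (m x x) (c x)"
    using assoc meet_compl by metis
  also have "\<dots> = m (m x x) (m (c (m x x)) (c bottom))"
    using compl_split[of x x] by simp
  also have "\<dots> = m bottom (c bottom)"
    using assoc meet_compl by metis
  finally show ?thesis by simp
qed

lemma bottom_meet [simp]: "m bottom x = bottom"
  using commute meet_bottom by metis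

lemma top_meet_compl_idem: "m (c bottom) (c (m (c x) (c x))) = x"
  using huntington[of x x] commute compl_meet by metis

lemma top_meet [simp]: "m (c bottom) x = x"
proof -
  have "m (c bottom) (c bottom) = c bottom"
    using top_meet_compl_idem[of "c bottom"] by simp
  then show ?thesis
    using top_meet_compl_idem[of x] assoc by metis
qed

lemma meet_top [simp]: "m x (c bottom) = x"
  using commute top_meet by metis

lemma meet_idem [simp]: "m x x = x"
proof -
  have "c (m x x) = c x"
    using top_meet_compl_idem[of "c x"] by simp
  then show ?thesis
    using compl_compl by metis
qed

lemma meet_left_idem [simp]: "m x (m x y) = m x y"
  using assoc meet_idem by metis

lemma meet_join_absorb: "m x (c (m (c x) y)) = x"
proof -
  let ?a = "c (m (c x) y)" and ?b = "c (m (c x) (c y))"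
  have x_eq: "m ?a ?b = x"
    by (rule huntington[symmetric])
  have "m x ?a = m (m ?a ?b) ?a"
    by (simp only: x_eq)
  also have "\<dots> = m ?a ?b"
    by (simp add: ac_simps)
  also have "\<dots> = x"
    by (fact x_eq)
  finally show ?thesis .
qed

lemma meet_compl_meet: "m x (c (m x y)) = m x (c y)"
proof -
  have "m x y = m x (c (m (c y) x))" for y
    using huntington[of y "c x"] meet_join_absorb[of x "c y"] commute left_commute
    by (metis compl_compl)
  then show ?thesis
    using commute by (metis compl_compl)
qed

lemma join_split: "x = c (m (c (m a x)) (c (m (c a) x)))"
  using arg_cong[OF compl_split[of x a], of c] by (simp add: commute)

lemma eq_by_cases:
  assumes "m a x = m a y" and "m (c a) x = m (c a) y"
  shows "x = y"
proof -
  have "x = c (m (c (m a x)) (c (m (c a) x)))"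
    by (rule join_split)
  also have "\<dots> = c (m (c (m a y)) (c (m (c a) y)))"
    by (simp only: assms)
  finally show ?thesis
    by (simp only: join_split[symmetric])
qed

lemma meet_eval_cong:
  assumes "\<And>i. m a (\<rho> i) = m a (\<sigma> i)"
  shows "m a (eval m c \<rho> t) = m a (eval m c \<sigma> t)"
proof (induction t)
  case (Var i)
  show ?case using assms by simp
next
  case (Meet s t)
  have "m a (m x y) = m (m a x) (m a y)" for x y
    by (simp add: ac_simps)
  then show ?case
    using Meet.IH by simp
next
  case (Cmp t)
  have "m a (c (eval m c \<rho> t)) = m a (c (m a (eval m c \<rho> t)))"
    by (simp only: meet_compl_meet)
  also have "\<dots> = m a (c (m a (eval m c \<sigma> t)))"
    by (simp only: Cmp.IH)
  also have "\<dots> = m a (c (eval m c \<sigma> t))"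
    by (simp only: meet_compl_meet)
  finally show ?case
    by simp
qed

lemma eval_of_bool:
  "eval m c (\<lambda>i. if \<sigma> i then c bottom else bottom) t
     = (if eval (\<and>) Not \<sigma> t then c bottom else bottom)"
  by (induction t) auto

lemma eval_eq_if_two_valued_outside:
  assumes valid: "\<And>\<sigma>. eval (\<and>) Not \<sigma> s = eval (\<and>) Not \<sigma> t"
    and "finite S" and "\<And>i. i \<notin> S \<Longrightarrow> \<rho> i \<in> {bottom, c bottom}"
  shows "eval m c \<rho> s = eval m c \<rho> t"
  using assms(2,3)
proof (induction S arbitrary: \<rho> rule: finite_induct)
  case empty
  then have two_valued: "\<rho> = (\<lambda>i. if \<rho> i = c bottom then c bottom else bottom)"
    by fastforce
  show ?case
    by (subst (1 2) two_valued) (simp only: eval_of_bool valid)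
next
  case (insert i S)
  have on_true: "m (\<rho> i) (eval m c \<rho> u) = m (\<rho> i) (eval m c (\<rho>(i := c bottom)) u)" for u
    by (rule meet_eval_cong) simp
  have on_false: "m (c (\<rho> i)) (eval m c \<rho> u) = m (c (\<rho> i)) (eval m c (\<rho>(i := bottom)) u)" for u
    by (rule meet_eval_cong) simp
  have updated: "eval m c (\<rho>(i := v)) s = eval m c (\<rho>(i := v)) t" if "v \<in> {bottom, c bottom}" for v
    using that insert.prems by (intro insert.IH) auto
  show ?case
  proof (rule eq_by_cases[where a = "\<rho> i"])
    show "m (\<rho> i) (eval m c \<rho> s) = m (\<rho> i) (eval m c \<rho> t)"
      using on_true[of s] on_true[of t] updated[of "c bottom"] by simp
    show "m (c (\<rho> i)) (eval m c \<rho> s) = m (c (\<rho> i)) (eval m c \<rho> t)"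
      using on_false[of s] on_false[of t] updated[of bottom] by simp
  qed
qed

lemma in_BA: "in_BA m c"
  unfolding in_BA_def sat_def
proof (intro allI impI)
  fix e :: eqn and \<rho> :: "nat \<Rightarrow> 'a"
  assume valid: "\<forall>\<sigma>. eval (\<and>) Not \<sigma> (fst e) = eval (\<and>) Not \<sigma> (snd e)"
  let ?S = "vars (fst e) \<union> vars (snd e)"
  let ?\<rho>' = "\<lambda>i. if i \<in> ?S then \<rho> i else bottom"
  have "eval m c ?\<rho>' (fst e) = eval m c ?\<rho>' (snd e)"
    using valid by (intro eval_eq_if_two_valued_outside[of _ _ ?S]) (auto simp: finite_vars)
  moreover have "eval m c ?\<rho>' u = eval m c \<rho> u" if "vars u \<subseteq> ?S" for u
    using that by (intro eval_cong) auto
  ultimately show "eval m c \<rho> (fst e) = eval m c \<rho> (snd e)"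
    by simp
qed

end

lemma sat_A6_iff: "sat m c A6 \<longleftrightarrow> (\<forall>x y z. m x (m y z) = m y (m z x))"
proof
  assume sat: "sat m c A6"
  show "\<forall>x y z. m x (m y z) = m y (m z x)"
  proof (intro allI)
    fix x y z
    from sat have "eval m c (\<lambda>n. if n = 0 then x else if n = 1 then y else z) (fst A6)
                 = eval m c (\<lambda>n. if n = 0 then x else if n = 1 then y else z) (snd A6)"
      unfolding sat_def by blast
    then show "m x (m y z) = m y (m z x)"
      by (simp add: A6_def)
  qed
qed (auto simp: sat_def A6_def)

lemma sat_J5'_iff: "sat m c J5' \<longleftrightarrow> (\<forall>x y. x = m (c (m (c x) y)) (c (m (c x) (c y))))"
proof
  assume sat: "sat m c J5'"
  show "\<forall>x y. x = m (c (m (c x) y)) (c (m (c x) (c y)))"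
  proof (intro allI)
    fix x y
    from sat have "eval m c (\<lambda>n. if n = 0 then x else y) (fst J5')
                 = eval m c (\<lambda>n. if n = 0 then x else y) (snd J5')"
      unfolding sat_def by blast
    then show "x = m (c (m (c x) y)) (c (m (c x) (c y)))"
      by (simp add: J5'_def)
  qed
qed (simp add: sat_def J5'_def)

lemma models_A6_J5'_iff_in_BA: "models m c {A6, J5'} \<longleftrightarrow> in_BA m c"
proof
  assume "models m c {A6, J5'}"
  then have cyclic: "\<And>x y z. m x (m y z) = m y (m z x)"
    and J5': "\<And>x y. x = m (c (m (c x) y)) (c (m (c x) (c y)))"
    by (auto simp: models_def sat_A6_iff sat_J5'_iff)
  have "abel_semigroup m"
    using cyclic J5' by (intro cyclic_surj_abel_semigroup) metis+
  with J5' have "huntington_algebra m c"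
    by (simp add: huntington_algebra_def huntington_algebra_axioms_def)
  then show "in_BA m c"
    by (rule huntington_algebra.in_BA)
next
  assume "in_BA m c"
  moreover have "sat (\<and>) Not A6" and "sat (\<and>) Not J5'"
    by (auto simp: sat_A6_iff sat_J5'_iff)
  ultimately show "models m c {A6, J5'}"
    unfolding in_BA_def models_def by blast
qed

lemma not_follows_if_countermodel:
  fixes m :: "nat \<Rightarrow> nat \<Rightarrow> nat"
  assumes "\<forall>d\<in>E. sat m c d" and "\<not> sat m c e"
  shows "\<not> follows E e"
proof -
  have "algebra_on UNIV m c" and "sat_on UNIV m c = sat m c"
    by (auto simp: algebra_on_def sat_on_def sat_def fun_eq_iff)
  then show ?thesis
    using assms unfolding follows_def by metis
qed

lemma not_follows_A6: "\<not> follows {J5'} A6"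
  by (rule not_follows_if_countermodel[where m = "\<lambda>x y. x" and c = id])
    (auto simp: sat_A6_iff sat_J5'_iff)

lemma not_follows_J5': "\<not> follows {A6} J5'"
  by (rule not_follows_if_countermodel[where m = "\<lambda>x y. 0" and c = id])
    (auto simp: sat_A6_iff sat_J5'_iff)

lemma A6_neq_J5': "A6 \<noteq> J5'"
  by (simp add: A6_def J5'_def)

theorem theorem4p1:
  shows "(\<forall>(m::'a \<Rightarrow> 'a \<Rightarrow> 'a) (c::'a \<Rightarrow> 'a). models m c {A6, J5'} \<longleftrightarrow> in_BA m c)
         \<and> independent {A6, J5'} \<and> card {A6, J5'} = 2"
proof (intro conjI allI)
  show "models m c {A6, J5'} \<longleftrightarrow> in_BA m c" for m :: "'a \<Rightarrow> 'a \<Rightarrow> 'a" and c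
    by (rule models_A6_J5'_iff_in_BA)
  show "independent {A6, J5'}"
    using A6_neq_J5' not_follows_A6 not_follows_J5' by (auto simp: independent_def insert_Diff_if)
  show "card {A6, J5'} = 2"
    using A6_neq_J5' by simp
qed

end
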